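(* Let $n\ge 3$ and let $\Gamma=\mathrm{W}(2^n,2)$, with vertex-set $\mathbb{Z}_{2^n}\times\mathbb{Z}_2$ where $(i,u)$ is adjacent to $(j,v)$ iff $i-j\in\{-1,1\}$. Let $\sigma$ and $\tau$ be the permutations of $\mathbb{Z}_{2^n}$ given by $\sigma=(1\,3\,5\,\ldots\,2^n-1)(0\,2\,4\,\ldots\,2^n-2)$ (i.e. $i\mapsto i+2$) and $\tau\colon i\mapsto -i+4$, acting on $\mathrm{V}(\Gamma)$ via the first coordinate (these are automorphisms of $\Gamma$). For $i\in\mathbb{Z}_{2^n}$, let $\alpha_i$ be the automorphism of $\Gamma$ interchanging $(i,0)$ and $(i,1)$ and fixing all other vertices. Let $x=\alpha_1\sigma$ and let $z$ be the product of all $\alpha_i$ with $i\not\equiv 1\pmod 4$, i.e. $z=\alpha_0\alpha_2\alpha_3\cdots\alpha_{2^n-4}\alpha_{2^n-2}\alpha_{2^n-1}$. Let $G=\langle x,\tau,z\rangle$. Then $G$ is a group of automorphisms of $\Gamma$ of order $2^{n+2}$ acting regularly on $\mathrm{E}(\Gamma)$, and every involution of $G$ fixes a vertex of $\Gamma$.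
   Context: Graphs are finite and simple. A group acts regularly on a set if it acts transitively with trivial point stabilisers. *)

theory Defs
  imports "HOL-Algebra.Algebra"
begin

definition WV :: "nat \<Rightarrow> (nat \<times> nat) set" where
  "WV n = {0..<2^n} \<times> {0..<2}"

definition Wadj :: "nat \<Rightarrow> nat \<times> nat \<Rightarrow> nat \<times> nat \<Rightarrow> bool" where
  "Wadj n a b \<longleftrightarrow> a \<in> WV n \<and> b \<in> WV n \<and>
     ((fst a + 1) mod 2^n = fst b \<or> (fst b + 1) mod 2^n = fst a)"

definition WE :: "nat \<Rightarrow> (nat \<times> nat) set set" where
  "WE n = {{a, b} | a b. Wadj n a b}"

definition WAut :: "nat \<Rightarrow> ((nat \<times> nat) \<Rightarrow> (nat \<times> nat)) set" where
  "WAut n = {f \<in> Bij (WV n). \<forall>a\<in>WV n. \<forall>b\<in>WV n. Wadj n (f a) (f b) \<longleftrightarrow> Wadj n a b}"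

definition wsigma :: "nat \<Rightarrow> (nat \<times> nat) \<Rightarrow> (nat \<times> nat)" where
  "wsigma n = restrict (\<lambda>(i, u). ((i + 2) mod 2^n, u)) (WV n)"

definition wtau :: "nat \<Rightarrow> (nat \<times> nat) \<Rightarrow> (nat \<times> nat)" where
  "wtau n = restrict (\<lambda>(i, u). ((4 + 2^n - i) mod 2^n, u)) (WV n)"

definition walpha :: "nat \<Rightarrow> nat \<Rightarrow> (nat \<times> nat) \<Rightarrow> (nat \<times> nat)" where
  "walpha n k = restrict (\<lambda>(i, u). if i = k then (i, 1 - u) else (i, u)) (WV n)"

text \<open>x = alpha_1 sigma, products read left to right (first alpha_1, then sigma).\<close>
definition wx :: "nat \<Rightarrow> (nat \<times> nat) \<Rightarrow> (nat \<times> nat)" where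
  "wx n = compose (WV n) (wsigma n) (walpha n 1)"

text \<open>z = product of all alpha_i with i not congruent 1 mod 4 (these commute).\<close>
definition wz :: "nat \<Rightarrow> (nat \<times> nat) \<Rightarrow> (nat \<times> nat)" where
  "wz n = restrict (\<lambda>(i, u). if i mod 4 \<noteq> 1 then (i, 1 - u) else (i, u)) (WV n)"

definition WG :: "nat \<Rightarrow> ((nat \<times> nat) \<Rightarrow> (nat \<times> nat)) set" where
  "WG n = generate (BijGroup (WV n)) {wx n, wtau n, wz n}"

end

theory Submission
  imports Defs
begin

text \<open>
  Put \<open>N = 2^n\<close> and \<open>M = N/2\<close>. The element \<open>x = \<alpha>\<^sub>1\<sigma>\<close> permutes the odd vertices \<open>(2j+1,u)\<close> in a
  single cycle of length \<open>N\<close>, so they can be coordinatised by \<open>t \<in> \<int>\<^sub>N\<close> with \<open>x\<close> acting as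
  \<open>t \<mapsto> t + 1\<close>. In this coordinate every element of \<open>G\<close> acts on the odd vertices as \<open>t \<mapsto> a t + b\<close>
  with \<open>a \<in> {\<plusminus>1, \<plusminus>(1+M)}\<close>, and on the even columns as \<open>i \<mapsto> \<plusminus>i + c\<close>, swapping the two layers
  exactly when \<open>a = \<plusminus>(1+M)\<close>. These \<open>4N\<close> maps form a group of automorphisms that contains \<open>x\<close>, \<open>\<tau>\<close>
  and \<open>z\<close> and is generated by them, which gives the order. Every edge joins an odd and an even
  vertex and is an image of \<open>{(0,0),(1,0)}\<close>. A map fixing an edge fixes both of its ends; then it
  cannot swap layers, nor reflect (a reflection of the columns fixes no two adjacent ones), so it
  is a translation with a fixed point, i.e. the identity. Finally, an involution fixes an odd
  vertex when \<open>a t + b \<equiv> t\<close> is solvable; otherwise it is the translation by \<open>M\<close> or a reflection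
  \<open>t \<mapsto> b - t\<close> with \<open>b\<close> odd, and these fix an even vertex.
\<close>

definition wN :: "nat \<Rightarrow> int" where "wN n = 2 ^ n"
definition wM :: "nat \<Rightarrow> int" where "wM n = 2 ^ (n - 1)"

text \<open>Position of an odd vertex \<open>(2j+1,u)\<close> on the \<open>x\<close>-cycle: \<open>(j - 1) mod M + M u\<close>.\<close>
definition odd_pos :: "nat \<Rightarrow> nat \<times> nat \<Rightarrow> int" where
  "odd_pos n v = ((int (fst v) - 3) div 2) mod wM n + wM n * int (snd v)"

definition odd_vert :: "nat \<Rightarrow> int \<Rightarrow> nat \<times> nat" where
  "odd_vert n t = (nat (2 * ((t + 1) mod wM n) + 1), if t mod wN n < wM n then 0 else 1)"

definition refl_sign :: "bool \<Rightarrow> int" where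
  "refl_sign r = (if r then -1 else 1)"

definition odd_mult :: "nat \<Rightarrow> bool \<Rightarrow> bool \<Rightarrow> int" where
  "odd_mult n r f = refl_sign r * (if f then 1 + wM n else 1)"

definition even_col :: "bool \<Rightarrow> int \<Rightarrow> int \<Rightarrow> int" where
  "even_col r b i = (if r then 2 * b + 6 - i else i + 2 * b)"

text \<open>Reflection flag \<open>r\<close>, layer-swap flag \<open>f\<close>, translation part \<open>b\<close>.\<close>
definition wmap :: "nat \<Rightarrow> bool \<Rightarrow> bool \<Rightarrow> int \<Rightarrow> nat \<times> nat \<Rightarrow> nat \<times> nat" where
  "wmap n r f b = restrict (\<lambda>v. if odd (fst v) then odd_vert n (odd_mult n r f * odd_pos n v + b)
     else (nat (even_col r b (int (fst v)) mod wN n), if f then 1 - snd v else snd v)) (WV n)"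

definition wmaps :: "nat \<Rightarrow> ((nat \<times> nat) \<Rightarrow> (nat \<times> nat)) set" where
  "wmaps n = {wmap n r f b | r f b. True}"

definition affine_at_odd :: "nat \<Rightarrow> (nat \<times> nat \<Rightarrow> nat \<times> nat) \<Rightarrow> int \<Rightarrow> int \<Rightarrow> nat \<Rightarrow> nat \<Rightarrow> bool" where
  "affine_at_odd n g a b j u \<longleftrightarrow> (\<exists>j' u' c. j' < nat (wM n) \<and> u' < 2 \<and>
     g (2 * j + 1, u) = (2 * j' + 1, u') \<and> odd_pos n (2 * j' + 1, u') = a * odd_pos n (2 * j + 1, u) + b + wN n * c)"

lemma int_mod_eqI: "0 \<le> r \<Longrightarrow> r < m \<Longrightarrow> m dvd (x - r) \<Longrightarrow> x mod (m::int) = r"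
  by (metis mod_eq_dvd_iff mod_pos_pos_trivial)

context
  fixes n :: nat
  assumes n_ge_3: "n \<ge> 3"
begin

abbreviation "M \<equiv> wM n"
abbreviation "N \<equiv> wN n"
abbreviation "K \<equiv> (2::int) ^ (n - 3)"

lemma M_eq_4K: "M = 4 * K" and N_eq_8K: "N = 8 * K"
proof -
  have "n - 1 = (n - 3) + 2" "n = (n - 3) + 3" using n_ge_3 by auto
  then have "M = 2 ^ (n - 3) * 2 ^ 2" "N = 2 ^ (n - 3) * 2 ^ 3"
    unfolding wM_def wN_def by (metis power_add)+
  then show "M = 4 * K" "N = 8 * K" by simp_all
qed

lemma N_eq_2M: "N = 2 * M"
  using M_eq_4K N_eq_8K by simp

lemma M_ge_4: "M \<ge> 4"
  using M_eq_4K by (simp add: mult_le_cancel_left1)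

lemma M_dvd_N: "M dvd N"
  using N_eq_2M by simp

lemma even_N: "even N"
  using N_eq_2M by simp

lemma mod_N_bounds: "0 \<le> x mod N" "x mod N < N"
  using M_ge_4 N_eq_2M by auto

lemma mod_N_eqI: "x = y + N * c \<Longrightarrow> x mod N = y mod N"
  by (simp add: mod_mult_self2)

lemma mod_N_eqE:
  assumes "x mod N = y mod N"
  obtains c where "x = y + N * c"
proof -
  have "N dvd x - y" using assms by (simp add: mod_eq_dvd_iff)
  then obtain c where "x - y = N * c" by (auto elim: dvdE)
  then show ?thesis using that[of c] by (simp add: algebra_simps)
qed

lemma WV_int_iff: "v \<in> WV n \<longleftrightarrow> int (fst v) < N \<and> snd v < 2"
  by (cases v) (auto simp: WV_def wN_def)

lemma N_nat: "N = int ((2::nat) ^ n)" and two_pow_eq_2M: "(2::nat) ^ n = 2 * nat M"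
proof -
  show N: "N = int ((2::nat) ^ n)" unfolding wN_def by simp
  then have "int ((2::nat) ^ n) = int (2 * nat M)" using N_eq_2M M_ge_4 by simp
  then show "(2::nat) ^ n = 2 * nat M" by (simp only: of_nat_eq_iff)
qed

lemma WV_nat_iff: "v \<in> WV n \<longleftrightarrow> fst v < 2 * nat M \<and> snd v < 2"
  by (cases v) (auto simp: WV_def two_pow_eq_2M)

section \<open>Positions of the odd vertices\<close>

lemma odd_WV_cases:
  assumes "v \<in> WV n" "odd (fst v)"
  obtains j u where "v = (2 * j + 1, u)" "j < nat M" "u < 2"
proof -
  obtain j where "fst v = 2 * j + 1" using assms(2) oddE by blast
  then show ?thesis using that[of j "snd v"] assms(1) by (cases v) (auto simp: WV_nat_iff)
qed

lemma odd_pos_explicit: "odd_pos n (2 * j + 1, u) = (int j - 1) mod M + M * int u"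
proof -
  have "(int (2 * j + 1) - 3) div 2 = int j - 1" by simp
  then show ?thesis unfolding odd_pos_def by simp
qed

lemma odd_pos_first: "odd_pos n (1, u) = M - 1 + M * int u"
  using odd_pos_explicit[of 0 u] M_ge_4 by (simp add: zmod_minus1)

lemma odd_pos_later: "1 \<le> j \<Longrightarrow> j < nat M \<Longrightarrow> odd_pos n (2 * j + 1, u) = int j - 1 + M * int u"
  using odd_pos_explicit[of j u] by simp

lemma odd_pos_bounds:
  assumes "v \<in> WV n" "odd (fst v)"
  shows "0 \<le> odd_pos n v" "odd_pos n v < N"
proof -
  obtain j u where v: "v = (2 * j + 1, u)" "u < 2" using odd_WV_cases assms by metis
  have "0 \<le> (int j - 1) mod M" "(int j - 1) mod M < M" using M_ge_4 by auto
  moreover have "u = 0 \<or> u = 1" using v by auto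
  ultimately show "0 \<le> odd_pos n v" "odd_pos n v < N" unfolding v odd_pos_explicit N_eq_2M by auto
qed

lemma odd_vert_WV: "odd_vert n t \<in> WV n" and odd_fst_odd_vert: "odd (fst (odd_vert n t))"
proof -
  have "0 \<le> (t + 1) mod M" "(t + 1) mod M < M" using M_ge_4 by auto
  then show "odd_vert n t \<in> WV n" "odd (fst (odd_vert n t))"
    unfolding odd_vert_def WV_int_iff using N_eq_2M by (auto simp: even_nat_iff)
qed

lemma odd_vert_cong: "t mod N = s mod N \<Longrightarrow> odd_vert n t = odd_vert n s"
proof -
  assume ts: "t mod N = s mod N"
  then have "(t + 1) mod M = (s + 1) mod M"
    by (metis M_dvd_N mod_add_left_eq mod_mod_cancel)
  then show ?thesis using ts unfolding odd_vert_def by simp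
qed

lemma odd_pos_odd_vert: "odd_pos n (odd_vert n t) = t mod N"
proof -
  define r where "r = (t + 1) mod M"
  have r: "0 \<le> r" "r < M" using M_ge_4 unfolding r_def by auto
  have "fst (odd_vert n t) = nat (2 * r + 1)" unfolding odd_vert_def r_def by simp
  then have "(int (fst (odd_vert n t)) - 3) div 2 = r - 1" using r by simp
  moreover have "(r - 1) mod M = t mod M"
    unfolding r_def by (metis add_diff_cancel_right' mod_diff_left_eq)
  ultimately have pos: "odd_pos n (odd_vert n t) = t mod M + M * int (snd (odd_vert n t))"
    unfolding odd_pos_def by simp
  define s where "s = t mod N"
  have s: "0 \<le> s" "s < 2 * M" using mod_N_bounds N_eq_2M unfolding s_def by auto
  have tm: "t mod M = s mod M" unfolding s_def by (simp add: M_dvd_N mod_mod_cancel)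
  show ?thesis
  proof (cases "s < M")
    case True
    then show ?thesis using pos s tm unfolding s_def[symmetric] by (simp add: odd_vert_def s_def)
  next
    case False
    have "s mod M = s - M" using False s by (intro int_mod_eqI) auto
    then show ?thesis using pos s tm False unfolding s_def[symmetric] by (simp add: odd_vert_def s_def)
  qed
qed

lemma odd_vert_odd_pos:
  assumes "v \<in> WV n" "odd (fst v)"
  shows "odd_vert n (odd_pos n v) = v"
proof -
  obtain j u where v: "v = (2 * j + 1, u)" "j < nat M" "u < 2" using odd_WV_cases assms by blast
  have m: "0 \<le> (int j - 1) mod M" "(int j - 1) mod M < M" using M_ge_4 by auto
  have "(int j - 1) mod M = int j - 1 - M * ((int j - 1) div M)"
    by (simp add: minus_div_mult_eq_mod[symmetric] mult.commute)
  then have "M dvd odd_pos n v + 1 - int j"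
    unfolding v odd_pos_explicit by (auto intro: dvdI[of _ _ "int u - (int j - 1) div M"] simp: algebra_simps)
  then have col: "(odd_pos n v + 1) mod M = int j" using v(2) by (intro int_mod_eqI) auto
  have layer: "odd_pos n v < M \<longleftrightarrow> u = 0" unfolding v(1) odd_pos_explicit using m v(3) by (cases u) auto
  show ?thesis
    using col layer odd_pos_bounds[OF assms] v(3) unfolding odd_vert_def by (simp add: v nat_int_add) (use v(3) in auto)
qed

lemma odd_vert_eqI:
  assumes "v \<in> WV n" "odd (fst v)" "odd_pos n v mod N = t mod N"
  shows "odd_vert n t = v"
  using odd_vert_odd_pos[OF assms(1,2)] odd_vert_cong[OF assms(3)[symmetric]] by simp

lemma fst_odd_vert: "int (fst (odd_vert n t)) = (2 * t + 3) mod N"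
proof -
  define r where "r = (t + 1) mod M"
  have r: "0 \<le> r" "r < M" using M_ge_4 unfolding r_def by auto
  have "t + 1 - r = M * ((t + 1) div M)" unfolding r_def by (simp add: minus_mod_eq_mult_div)
  then have "2 * t + 3 - (2 * r + 1) = N * ((t + 1) div M)" using N_eq_2M by (simp add: algebra_simps)
  then have "N dvd 2 * t + 3 - (2 * r + 1)" by simp
  then have "(2 * t + 3) mod N = 2 * r + 1" using r N_eq_2M by (intro int_mod_eqI) auto
  moreover have "int (fst (odd_vert n t)) = 2 * r + 1" using r unfolding odd_vert_def r_def by simp
  ultimately show ?thesis by simp
qed

lemma double_odd_pos:
  assumes "v \<in> WV n" "odd (fst v)"
  shows "(2 * odd_pos n v) mod N = (int (fst v) - 3) mod N"
proof -
  obtain j u where v: "v = (2 * j + 1, u)" using odd_WV_cases assms by metis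
  have "2 * ((int j - 1) mod M) = (2 * (int j - 1)) mod N" unfolding N_eq_2M by (simp add: mult_mod_right)
  then have "2 * odd_pos n v = (2 * (int j - 1)) mod N + N * int u"
    unfolding v odd_pos_explicit N_eq_2M by (simp add: algebra_simps)
  then show ?thesis unfolding v by (simp add: algebra_simps)
qed

section \<open>Maps of the form \<open>wmap\<close>\<close>

lemma wmap_odd: "v \<in> WV n \<Longrightarrow> odd (fst v) \<Longrightarrow> wmap n r f b v = odd_vert n (odd_mult n r f * odd_pos n v + b)"
  unfolding wmap_def by simp

lemma wmap_even: "v \<in> WV n \<Longrightarrow> even (fst v) \<Longrightarrow>
    wmap n r f b v = (nat (even_col r b (int (fst v)) mod N), if f then 1 - snd v else snd v)"
  unfolding wmap_def by simp

lemma wmap_undefined: "v \<notin> WV n \<Longrightarrow> wmap n r f b v = undefined"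
  unfolding wmap_def by simp

lemma odd_pos_wmap: "v \<in> WV n \<Longrightarrow> odd (fst v) \<Longrightarrow>
    odd_pos n (wmap n r f b v) = (odd_mult n r f * odd_pos n v + b) mod N"
  by (simp add: wmap_odd odd_pos_odd_vert)

lemma double_odd_mult: "\<exists>c. 2 * odd_mult n r f = 2 * refl_sign r + N * c"
  by (rule exI[of _ "if f then refl_sign r else 0"]) (auto simp: odd_mult_def N_eq_2M algebra_simps)

text \<open>The multipliers \<open>\<plusminus>1, \<plusminus>(1+M)\<close> form a Klein four-group modulo \<open>N\<close>, since \<open>M\<^sup>2 \<equiv> 0\<close>.\<close>
lemma odd_mult_mult: "\<exists>c. odd_mult n r f * odd_mult n r' f' = odd_mult n (r \<noteq> r') (f \<noteq> f') + N * c"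
proof -
  have "(1 + M) * (1 + M) = 1 + N * (1 + 2 * K)" using M_eq_4K N_eq_8K by (simp add: algebra_simps)
  then show ?thesis
    by (intro exI[of _ "if f \<and> f' then refl_sign (r \<noteq> r') * (1 + 2 * K) else 0"])
       (cases r; cases r'; cases f; cases f'; simp add: odd_mult_def refl_sign_def M_eq_4K N_eq_8K algebra_simps)
qed

lemma odd_mult_mod_N:
  "odd_mult n r f mod N = (if r then (if f then M - 1 else N - 1) else (if f then 1 + M else 1))"
  using M_ge_4 N_eq_2M by (cases r; cases f) (auto simp: odd_mult_def refl_sign_def intro!: int_mod_eqI)

lemma odd_mult_mod_N_inj: "odd_mult n r f mod N = odd_mult n r' f' mod N \<Longrightarrow> r = r' \<and> f = f'"
  unfolding odd_mult_mod_N using M_ge_4 N_eq_2M by (cases r; cases f; cases r'; cases f') auto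

lemma even_col_mod_N: "even_col r b (y mod N) mod N = even_col r b y mod N"
  unfolding even_col_def by (cases r) (simp_all add: mod_simps)

lemma even_col_even_col: "even_col r b (even_col r' b' i) = even_col (r \<noteq> r') (refl_sign r * b' + b) i"
  unfolding even_col_def refl_sign_def by (cases r; cases r') (simp_all add: algebra_simps)

lemma even_col_odd_mult_mod_N:
  "even_col R (odd_mult n r f * b' + b) i mod N = even_col R (refl_sign r * b' + b) i mod N"
proof -
  obtain c where "2 * odd_mult n r f = 2 * refl_sign r + N * c" using double_odd_mult by blast
  then have "even_col R (odd_mult n r f * b' + b) i = even_col R (refl_sign r * b' + b) i + N * (c * b')"
    unfolding even_col_def by (simp add: algebra_simps)
  then show ?thesis by (rule mod_N_eqI)
qed

lemma wmap_WV: "v \<in> WV n \<Longrightarrow> wmap n r f b v \<in> WV n"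
  and even_fst_wmap: "v \<in> WV n \<Longrightarrow> even (fst (wmap n r f b v)) \<longleftrightarrow> even (fst v)"
proof -
  assume v: "v \<in> WV n"
  have "wmap n r f b v \<in> WV n \<and> (even (fst (wmap n r f b v)) \<longleftrightarrow> even (fst v))"
  proof (cases "odd (fst v)")
    case True
    then show ?thesis using odd_vert_WV odd_fst_odd_vert v by (simp add: wmap_odd)
  next
    case False
    then have "even (even_col r b (int (fst v)))" unfolding even_col_def by auto
    then have "even (even_col r b (int (fst v)) mod N)" using even_N by (simp add: dvd_mod)
    moreover have "snd v < 2" using v WV_int_iff by auto
    ultimately show ?thesis using False v mod_N_bounds[of "even_col r b (int (fst v))"]
      by (auto simp: wmap_even WV_int_iff even_nat_iff)
  qed
  then show "wmap n r f b v \<in> WV n" "even (fst (wmap n r f b v)) \<longleftrightarrow> even (fst v)" by auto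
qed

lemma fst_wmap: "v \<in> WV n \<Longrightarrow> int (fst (wmap n r f b v)) = even_col r b (int (fst v)) mod N"
proof (cases "odd (fst v)")
  case True
  assume v: "v \<in> WV n"
  obtain c1 where c1: "2 * odd_mult n r f = 2 * refl_sign r + N * c1" using double_odd_mult by blast
  obtain c2 where c2: "2 * odd_pos n v = int (fst v) - 3 + N * c2"
    using double_odd_pos[OF v True] by (rule mod_N_eqE)
  have "2 * (odd_mult n r f * odd_pos n v + b) + 3 = (2 * odd_mult n r f) * odd_pos n v + 2 * b + 3"
    by (simp add: algebra_simps)
  also have "\<dots> = refl_sign r * (2 * odd_pos n v) + N * c1 * odd_pos n v + 2 * b + 3"
    unfolding c1 by (simp add: algebra_simps)
  also have "\<dots> = even_col r b (int (fst v)) + N * (refl_sign r * c2 + c1 * odd_pos n v)"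
    unfolding c2 even_col_def refl_sign_def by (cases r) (simp_all add: algebra_simps)
  finally show ?thesis using v True by (simp add: wmap_odd fst_odd_vert)
next
  case False
  then show "v \<in> WV n \<Longrightarrow> ?thesis" using mod_N_bounds by (simp add: wmap_even)
qed

lemma wmap_wmap:
  assumes v: "v \<in> WV n"
  shows "wmap n r f b (wmap n r' f' b' v) = wmap n (r \<noteq> r') (f \<noteq> f') (odd_mult n r f * b' + b) v"
proof (cases "odd (fst v)")
  case True
  have w: "wmap n r' f' b' v \<in> WV n" "odd (fst (wmap n r' f' b' v))"
    using wmap_WV even_fst_wmap v True by auto
  obtain c where c: "odd_mult n r f * odd_mult n r' f' = odd_mult n (r \<noteq> r') (f \<noteq> f') + N * c"
    using odd_mult_mult by blast
  have "(odd_mult n r f * ((odd_mult n r' f' * odd_pos n v + b') mod N) + b) mod N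
      = (odd_mult n r f * (odd_mult n r' f' * odd_pos n v + b') + b) mod N"
    by (metis mod_add_left_eq mod_mult_right_eq)
  also have "odd_mult n r f * (odd_mult n r' f' * odd_pos n v + b') + b
      = (odd_mult n r f * odd_mult n r' f') * odd_pos n v + (odd_mult n r f * b' + b)"
    by (simp add: algebra_simps)
  also have "\<dots> = odd_mult n (r \<noteq> r') (f \<noteq> f') * odd_pos n v + (odd_mult n r f * b' + b)
      + N * (c * odd_pos n v)"
    unfolding c by (simp add: algebra_simps)
  finally have "(odd_mult n r f * ((odd_mult n r' f' * odd_pos n v + b') mod N) + b) mod N
      = (odd_mult n (r \<noteq> r') (f \<noteq> f') * odd_pos n v + (odd_mult n r f * b' + b)) mod N"
    by (simp add: mod_N_eqI)
  then show ?thesis using v True w by (simp add: wmap_odd odd_pos_odd_vert) (rule odd_vert_cong)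
next
  case False
  have w: "wmap n r' f' b' v \<in> WV n" "even (fst (wmap n r' f' b' v))"
    using wmap_WV even_fst_wmap v False by auto
  have "even_col r b (even_col r' b' (int (fst v)) mod N) mod N
      = even_col (r \<noteq> r') (odd_mult n r f * b' + b) (int (fst v)) mod N"
    by (simp add: even_col_mod_N even_col_even_col even_col_odd_mult_mod_N)
  moreover have "snd v < 2" using v WV_int_iff by auto
  ultimately show ?thesis using v False w mod_N_bounds[of "even_col r' b' (int (fst v))"]
    by (auto simp: wmap_even)
qed

lemma wmap_mod_N_cong:
  assumes "b mod N = b' mod N"
  shows "wmap n r f b = wmap n r f b'"
proof
  fix v
  obtain c where c: "b = b' + N * c" using assms by (rule mod_N_eqE)
  show "wmap n r f b v = wmap n r f b' v"
  proof (cases "v \<in> WV n")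
    case False
    then show ?thesis by (simp add: wmap_undefined)
  next
    case v: True
    show ?thesis
    proof (cases "odd (fst v)")
      case True
      have "odd_mult n r f * odd_pos n v + b = (odd_mult n r f * odd_pos n v + b') + N * c"
        unfolding c by (simp add: algebra_simps)
      then have "(odd_mult n r f * odd_pos n v + b) mod N = (odd_mult n r f * odd_pos n v + b') mod N"
        by (rule mod_N_eqI)
      then show ?thesis using v True by (simp add: wmap_odd) (rule odd_vert_cong)
    next
      case False
      have "even_col r b (int (fst v)) = even_col r b' (int (fst v)) + N * (2 * c)"
        unfolding c even_col_def by (simp add: algebra_simps)
      then show ?thesis using v False by (simp add: wmap_even)
    qed
  qed
qed

lemma one_BijGroup: "\<one>\<^bsub>BijGroup (WV n)\<^esub> = (\<lambda>x\<in>WV n. x)"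
  by (simp add: BijGroup_def)

lemma wmap_id: "wmap n False False 0 = \<one>\<^bsub>BijGroup (WV n)\<^esub>"
proof
  fix v
  show "wmap n False False 0 v = \<one>\<^bsub>BijGroup (WV n)\<^esub> v"
  proof (cases "v \<in> WV n")
    case False
    then show ?thesis by (simp add: wmap_undefined one_BijGroup)
  next
    case v: True
    then show ?thesis
      by (cases "odd (fst v)")
        (auto simp: wmap_odd wmap_even one_BijGroup odd_mult_def refl_sign_def even_col_def
          odd_vert_odd_pos WV_int_iff)
  qed
qed

lemma wmap_apply_id: "v \<in> WV n \<Longrightarrow> wmap n False False 0 v = v"
  by (simp add: wmap_id one_BijGroup)

lemma wmap_inverse:
  assumes "v \<in> WV n"
  shows "wmap n r f (- (odd_mult n r f * b)) (wmap n r f b v) = v"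
    and "wmap n r f b (wmap n r f (- (odd_mult n r f * b)) v) = v"
proof -
  obtain c where c: "odd_mult n r f * odd_mult n r f = odd_mult n False False + N * c"
    using odd_mult_mult[of r f r f] by auto
  then have "odd_mult n r f * - (odd_mult n r f * b) + b = 0 + N * (- c * b)"
    by (simp add: odd_mult_def refl_sign_def algebra_simps)
  then have "wmap n False False (odd_mult n r f * - (odd_mult n r f * b) + b) = wmap n False False 0"
    by (intro wmap_mod_N_cong mod_N_eqI)
  then show "wmap n r f b (wmap n r f (- (odd_mult n r f * b)) v) = v"
    using assms by (simp add: wmap_wmap wmap_apply_id)
  show "wmap n r f (- (odd_mult n r f * b)) (wmap n r f b v) = v"
    using assms by (simp add: wmap_wmap wmap_apply_id)
qed

lemma wmap_Bij: "wmap n r f b \<in> Bij (WV n)"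
proof -
  have "bij_betw (wmap n r f b) (WV n) (WV n)"
    by (rule bij_betw_byWitness[of _ "wmap n r f (- (odd_mult n r f * b))"])
      (auto simp: wmap_inverse wmap_WV)
  then show ?thesis unfolding Bij_def wmap_def by simp
qed

lemma wmap_mult: "wmap n r f b \<otimes>\<^bsub>BijGroup (WV n)\<^esub> wmap n r' f' b'
    = wmap n (r \<noteq> r') (f \<noteq> f') (odd_mult n r f * b' + b)"
proof
  fix v
  show "(wmap n r f b \<otimes>\<^bsub>BijGroup (WV n)\<^esub> wmap n r' f' b') v
      = wmap n (r \<noteq> r') (f \<noteq> f') (odd_mult n r f * b' + b) v"
    using wmap_Bij by (cases "v \<in> WV n") (simp_all add: BijGroup_def compose_def wmap_wmap wmap_undefined)
qed

lemma wmap_inv: "inv\<^bsub>BijGroup (WV n)\<^esub> (wmap n r f b) = wmap n r f (- (odd_mult n r f * b))"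
proof -
  have "wmap n r f (- (odd_mult n r f * b)) \<otimes>\<^bsub>BijGroup (WV n)\<^esub> wmap n r f b = \<one>\<^bsub>BijGroup (WV n)\<^esub>"
    by (simp add: wmap_mult flip: wmap_id)
  then show ?thesis using wmap_Bij
    by (intro group.inv_equality[OF group_BijGroup]) (auto simp: BijGroup_def)
qed

lemma wmap_eq_wmapD:
  assumes "wmap n r f b = wmap n r' f' b'"
  shows "r = r' \<and> f = f' \<and> b mod N = b' mod N"
proof -
  have pos: "odd_pos n (odd_vert n 0) = 0" "odd_pos n (odd_vert n 1) = 1"
    using odd_pos_odd_vert M_ge_4 N_eq_2M by auto
  have "odd_pos n (wmap n r f b (odd_vert n 0)) = odd_pos n (wmap n r' f' b' (odd_vert n 0))"
    using assms by simp
  then have b: "b mod N = b' mod N" using odd_vert_WV odd_fst_odd_vert by (simp add: odd_pos_wmap pos)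
  have "odd_pos n (wmap n r f b (odd_vert n 1)) = odd_pos n (wmap n r' f' b' (odd_vert n 1))"
    using assms by simp
  then have "(odd_mult n r f + b) mod N = (odd_mult n r' f' + b') mod N"
    using odd_vert_WV odd_fst_odd_vert by (simp add: odd_pos_wmap pos)
  then have "odd_mult n r f mod N = odd_mult n r' f' mod N" using b by (metis mod_diff_cong add_diff_cancel_right')
  then show ?thesis using odd_mult_mod_N_inj b by blast
qed

lemma wmaps_subgroup: "subgroup (wmaps n) (BijGroup (WV n))"
proof (rule group.subgroupI[OF group_BijGroup])
  show "wmaps n \<subseteq> carrier (BijGroup (WV n))" using wmap_Bij by (auto simp: wmaps_def BijGroup_def)
  show "wmaps n \<noteq> {}" unfolding wmaps_def by blast
  fix g h assume "g \<in> wmaps n" "h \<in> wmaps n"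
  then show "inv\<^bsub>BijGroup (WV n)\<^esub> g \<in> wmaps n" "g \<otimes>\<^bsub>BijGroup (WV n)\<^esub> h \<in> wmaps n"
    unfolding wmaps_def by (auto simp: wmap_inv wmap_mult) blast+
qed

section \<open>The generators\<close>

lemma affine_at_oddI:
  assumes "g (2 * j + 1, u) = (2 * j' + 1, u')"
    and "odd_pos n (2 * j' + 1, u') = a * odd_pos n (2 * j + 1, u) + b + N * c"
    and "j' < nat M" "u' < 2"
  shows "affine_at_odd n g a b j u"
  using assms unfolding affine_at_odd_def by blast

lemma wmap_eqI:
  assumes outside: "\<And>v. v \<notin> WV n \<Longrightarrow> g v = undefined"
    and even: "\<And>v. v \<in> WV n \<Longrightarrow> even (fst v) \<Longrightarrow>
      int (fst (g v)) = even_col r b (int (fst v)) mod N \<and> snd (g v) = (if f then 1 - snd v else snd v)"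
    and odd: "\<And>j u. j < nat M \<Longrightarrow> u < 2 \<Longrightarrow> affine_at_odd n g (odd_mult n r f) b j u"
  shows "g = wmap n r f b"
proof
  fix v
  show "g v = wmap n r f b v"
  proof (cases "v \<in> WV n")
    case False
    then show ?thesis by (simp add: outside wmap_undefined)
  next
    case v: True
    show ?thesis
    proof (cases "odd (fst v)")
      case True
      then obtain j u where ju: "v = (2 * j + 1, u)" "j < nat M" "u < 2" using v odd_WV_cases by blast
      then obtain j' u' c where w: "j' < nat M" "u' < 2" "g v = (2 * j' + 1, u')"
        and pos: "odd_pos n (2 * j' + 1, u') = odd_mult n r f * odd_pos n v + b + N * c"
        using odd unfolding affine_at_odd_def by blast
      have "(2 * j' + 1, u') \<in> WV n" using w by (simp add: WV_nat_iff)
      moreover have "odd_pos n (2 * j' + 1, u') mod N = (odd_mult n r f * odd_pos n v + b) mod N"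
        using pos by (rule mod_N_eqI)
      ultimately show ?thesis using v True w(3) by (simp add: wmap_odd odd_vert_eqI)
    next
      case False
      then have "int (fst (g v)) = even_col r b (int (fst v)) mod N"
        "snd (g v) = (if f then 1 - snd v else snd v)" using v even by auto
      then show ?thesis using v False by (simp add: wmap_even prod_eq_iff flip: nat_int)
    qed
  qed
qed

lemma add_2M_mod_2M: "k < 2 * nat M \<Longrightarrow> (2 * nat M + k) mod (2 * nat M) = k"
  by (metis mod_add_self1 mod_less)

lemma mod_two_pow_int: "int (k mod 2 ^ n) = int k mod N"
  by (simp add: N_nat zmod_int)

lemma wx_apply: "v \<in> WV n \<Longrightarrow> wx n v = ((fst v + 2) mod 2 ^ n, if fst v = 1 then 1 - snd v else snd v)"
  by (cases v) (auto simp: wx_def compose_def wsigma_def walpha_def WV_def)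

lemma wtau_apply: "v \<in> WV n \<Longrightarrow> wtau n v = ((4 + 2 ^ n - fst v) mod 2 ^ n, snd v)"
  by (cases v) (auto simp: wtau_def)

lemma wz_apply: "v \<in> WV n \<Longrightarrow> wz n v = (if fst v mod 4 \<noteq> 1 then (fst v, 1 - snd v) else v)"
  by (cases v) (auto simp: wz_def)

lemma wx_affine_at_odd:
  assumes j: "j < nat M" and u: "u < 2"
  shows "affine_at_odd n (wx n) 1 1 j u"
proof -
  have x: "wx n (2 * j + 1, u) = ((2 * j + 3) mod (2 * nat M), if j = 0 then 1 - u else u)"
    using j u by (simp add: wx_apply WV_nat_iff two_pow_eq_2M) (simp add: eval_nat_numeral)
  consider "j = 0" | "j = nat M - 1" | "1 \<le> j" "j < nat M - 1" using j by linarith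
  then show ?thesis
  proof cases
    case 1
    have "3 < 2 * nat M" using M_ge_4 by linarith
    then have "wx n (2 * j + 1, u) = (2 * 1 + 1, 1 - u)" using 1 x by simp
    moreover have "odd_pos n (2 * 1 + 1, 1 - u) = 1 * odd_pos n (2 * j + 1, u) + 1 + N * (- int u)"
      using 1 u N_eq_2M odd_pos_later[of 1 "1 - u"] odd_pos_first[of u] M_ge_4
      by (simp add: of_nat_diff algebra_simps)
    ultimately show ?thesis by (rule affine_at_oddI) (use M_ge_4 in auto)
  next
    case 2
    then have wrap: "2 * j + 3 = 1 + 2 * nat M" and "j \<noteq> 0" using M_ge_4 by linarith+
    have "(2 * j + 3) mod (2 * nat M) = 1"
      unfolding wrap mod_add_self2 using M_ge_4 by simp
    then have "wx n (2 * j + 1, u) = (2 * 0 + 1, u)" using x \<open>j \<noteq> 0\<close> by simp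
    moreover have "odd_pos n (2 * 0 + 1, u) = 1 * odd_pos n (2 * j + 1, u) + 1 + N * 0"
      using 2 M_ge_4 odd_pos_first[of u] odd_pos_later[of j u] by (simp add: of_nat_diff)
    ultimately show ?thesis by (rule affine_at_oddI) (use M_ge_4 u in auto)
  next
    case 3
    then have "wx n (2 * j + 1, u) = (2 * (j + 1) + 1, u)" using x by simp
    moreover have "odd_pos n (2 * (j + 1) + 1, u) = 1 * odd_pos n (2 * j + 1, u) + 1 + N * 0"
      using 3 odd_pos_later[of j u] odd_pos_later[of "j + 1" u] by simp
    ultimately show ?thesis by (rule affine_at_oddI) (use 3 u in auto)
  qed
qed

lemma wx_eq_wmap: "wx n = wmap n False False 1"
proof (rule wmap_eqI)
  show "wx n v = undefined" if "v \<notin> WV n" for v using that by (simp add: wx_def compose_def)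
  show "int (fst (wx n v)) = even_col False 1 (int (fst v)) mod N \<and>
      snd (wx n v) = (if False then 1 - snd v else snd v)" if "v \<in> WV n" "even (fst v)" for v
    using that by (auto simp: wx_apply mod_two_pow_int even_col_def add.commute)
  show "affine_at_odd n (wx n) (odd_mult n False False) 1 j u" if "j < nat M" "u < 2" for j u
    using wx_affine_at_odd[OF that] by (simp add: odd_mult_def refl_sign_def)
qed

lemma wtau_affine_at_odd:
  assumes j: "j < nat M" and u: "u < 2"
  shows "affine_at_odd n (wtau n) (- 1) (M - 1) j u"
proof -
  have t: "wtau n (2 * j + 1, u) = ((2 * nat M + 3 - 2 * j) mod (2 * nat M), u)"
    using j u by (simp add: wtau_apply WV_nat_iff two_pow_eq_2M) (simp add: eval_nat_numeral)
  consider "j = 0" | "j = 1" | "2 \<le> j" by linarith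
  then show ?thesis
  proof cases
    case 1
    have "(2 * nat M + 3) mod (2 * nat M) = 3" using M_ge_4 by (intro add_2M_mod_2M) linarith
    then have "wtau n (2 * j + 1, u) = (2 * 1 + 1, u)" using 1 t by simp
    moreover have "odd_pos n (2 * 1 + 1, u) = - 1 * odd_pos n (2 * j + 1, u) + (M - 1) + N * int u"
      using 1 M_ge_4 N_eq_2M odd_pos_first[of u] odd_pos_later[of 1 u] by (simp add: algebra_simps)
    ultimately show ?thesis by (rule affine_at_oddI) (use M_ge_4 u in auto)
  next
    case 2
    have "(2 * nat M + 1) mod (2 * nat M) = 1" using M_ge_4 by (intro add_2M_mod_2M) linarith
    then have "wtau n (2 * j + 1, u) = (2 * 0 + 1, u)" using 2 t by (simp add: eval_nat_numeral)
    moreover have "odd_pos n (2 * 0 + 1, u) = - 1 * odd_pos n (2 * j + 1, u) + (M - 1) + N * int u"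
      using 2 M_ge_4 N_eq_2M odd_pos_first[of u] odd_pos_later[of 1 u] by (simp add: algebra_simps)
    ultimately show ?thesis by (rule affine_at_oddI) (use M_ge_4 u in auto)
  next
    case 3
    have "2 * nat M + 3 - 2 * j = 2 * (nat M + 1 - j) + 1" "2 * (nat M + 1 - j) + 1 < 2 * nat M"
      using 3 j by auto
    then have "wtau n (2 * j + 1, u) = (2 * (nat M + 1 - j) + 1, u)" using t by simp
    moreover have "odd_pos n (2 * (nat M + 1 - j) + 1, u)
        = - 1 * odd_pos n (2 * j + 1, u) + (M - 1) + N * int u"
      using 3 j M_ge_4 N_eq_2M odd_pos_later[of j u] odd_pos_later[of "nat M + 1 - j" u]
      by (simp add: of_nat_diff algebra_simps)
    ultimately show ?thesis by (rule affine_at_oddI) (use 3 j u in auto)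
  qed
qed

lemma wtau_eq_wmap: "wtau n = wmap n True False (M - 1)"
proof (rule wmap_eqI)
  show "wtau n v = undefined" if "v \<notin> WV n" for v using that by (simp add: wtau_def)
  show "int (fst (wtau n v)) = even_col True (M - 1) (int (fst v)) mod N \<and>
      snd (wtau n v) = (if False then 1 - snd v else snd v)" if "v \<in> WV n" "even (fst v)" for v
  proof -
    have "fst v < 2 ^ n" using that by (auto simp: WV_def mem_Times_iff)
    then show ?thesis
      using that by (simp add: wtau_apply mod_two_pow_int of_nat_diff even_col_def N_eq_2M flip: wN_def)
  qed
  show "affine_at_odd n (wtau n) (odd_mult n True False) (M - 1) j u" if "j < nat M" "u < 2" for j u
    using wtau_affine_at_odd[OF that] by (simp add: odd_mult_def refl_sign_def)
qed

text \<open>In the three cases below the extra multiples of \<open>N\<close> come from \<open>M\<^sup>2 = 2 K N\<close>.\<close>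
lemma wz_affine_at_odd:
  assumes j: "j < nat M" and u: "u < 2"
  shows "affine_at_odd n (wz n) (1 + M) M j u"
proof -
  consider "j = 0" | l where "j = 2 * l" "1 \<le> l" | l where "j = 2 * l + 1"
    by (metis One_nat_def Suc_leI evenE gr0I mult_0_right oddE)
  then show ?thesis
  proof cases
    case 1
    have "wz n (2 * j + 1, u) = (2 * j + 1, u)" using 1 j u by (simp add: wz_apply WV_nat_iff)
    moreover have p: "odd_pos n (2 * j + 1, u) = M - 1 + M * int u" using 1 odd_pos_first[of u] by simp
    have "odd_pos n (2 * j + 1, u) = (1 + M) * odd_pos n (2 * j + 1, u) + M + N * (- 2 * K * (1 + int u))"
      unfolding p by (simp add: M_eq_4K N_eq_8K algebra_simps)
    ultimately show ?thesis by (rule affine_at_oddI) (use j u in auto)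
  next
    case (2 l)
    have "(2 * j + 1) mod 4 = 1" using 2 by (simp add: mod_mult_right_eq[symmetric])
    then have "wz n (2 * j + 1, u) = (2 * j + 1, u)" using j u by (simp add: wz_apply WV_nat_iff)
    moreover have p: "odd_pos n (2 * j + 1, u) = int j - 1 + M * int u"
      using 2 j by (intro odd_pos_later) auto
    have "int j - 1 + M * int u = (1 + M) * (int j - 1 + M * int u) + M + N * (- int l - 2 * K * int u)"
      unfolding 2 by (simp add: M_eq_4K N_eq_8K algebra_simps)
    then have "odd_pos n (2 * j + 1, u) = (1 + M) * odd_pos n (2 * j + 1, u) + M + N * (- int l - 2 * K * int u)"
      by (simp only: p)
    ultimately show ?thesis by (rule affine_at_oddI) (use j u in auto)
  next
    case (3 l)
    have "(2 * j + 1) mod 4 = 3" using 3 by (simp add: mod_mult_right_eq[symmetric])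
    then have "wz n (2 * j + 1, u) = (2 * j + 1, 1 - u)" using j u by (simp add: wz_apply WV_nat_iff)
    moreover have p: "odd_pos n (2 * j + 1, u) = int j - 1 + M * int u"
      and p': "odd_pos n (2 * j + 1, 1 - u) = int j - 1 + M * int (1 - u)"
      using 3 j by (intro odd_pos_later; simp)+
    have "int j - 1 + M * int (1 - u)
        = (1 + M) * (int j - 1 + M * int u) + M + N * (- int l - int u - 2 * K * int u)"
      using u unfolding 3 by (simp add: M_eq_4K N_eq_8K of_nat_diff algebra_simps)
    then have "odd_pos n (2 * j + 1, 1 - u)
        = (1 + M) * odd_pos n (2 * j + 1, u) + M + N * (- int l - int u - 2 * K * int u)"
      by (simp only: p p')
    ultimately show ?thesis by (rule affine_at_oddI) (use j in auto)
  qed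
qed

lemma wz_eq_wmap: "wz n = wmap n False True M"
proof (rule wmap_eqI)
  show "wz n v = undefined" if "v \<notin> WV n" for v using that by (simp add: wz_def)
  show "int (fst (wz n v)) = even_col False M (int (fst v)) mod N \<and>
      snd (wz n v) = (if True then 1 - snd v else snd v)" if "v \<in> WV n" "even (fst v)" for v
  proof -
    have "fst v mod 4 \<noteq> 1" using that(2) by (metis dvd_mod_iff even_numeral odd_one)
    moreover have "int (fst v) < N" using that(1) WV_int_iff by auto
    ultimately show ?thesis using that by (simp add: wz_apply even_col_def N_eq_2M)
  qed
  show "affine_at_odd n (wz n) (odd_mult n False True) M j u" if "j < nat M" "u < 2" for j u
    using wz_affine_at_odd[OF that] by (simp add: odd_mult_def refl_sign_def)
qed

section \<open>The group generated by \<open>x\<close>, \<open>\<tau>\<close> and \<open>z\<close>\<close>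

lemma WG_subset_wmaps: "WG n \<subseteq> wmaps n"
  unfolding WG_def
proof (rule group.generate_subgroup_incl[OF group_BijGroup _ wmaps_subgroup])
  show "{wx n, wtau n, wz n} \<subseteq> wmaps n"
    unfolding wmaps_def wx_eq_wmap wtau_eq_wmap wz_eq_wmap by blast
qed

lemma generators_in_WG: "wx n \<in> WG n" "wtau n \<in> WG n" "wz n \<in> WG n"
  unfolding WG_def by (auto intro: generate.incl)

lemma WG_mult_closed: "g \<in> WG n \<Longrightarrow> h \<in> WG n \<Longrightarrow> g \<otimes>\<^bsub>BijGroup (WV n)\<^esub> h \<in> WG n"
  unfolding WG_def by (rule generate.eng)

lemma translation_in_WG: "wmap n False False (int k) \<in> WG n"
proof (induction k)
  case 0
  show ?case using generate.one by (simp add: WG_def wmap_id)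
next
  case (Suc k)
  have "wx n \<otimes>\<^bsub>BijGroup (WV n)\<^esub> wmap n False False (int k) = wmap n False False (int (Suc k))"
    unfolding wx_eq_wmap wmap_mult by (simp add: odd_mult_def refl_sign_def add.commute)
  then show ?case using WG_mult_closed[OF generators_in_WG(1) Suc.IH] by simp
qed

lemma wmaps_subset_WG: "wmaps n \<subseteq> WG n"
proof
  fix g assume "g \<in> wmaps n"
  then obtain r f b where g: "g = wmap n r f b" unfolding wmaps_def by blast
  obtain c where c: "wmap n r f c \<in> WG n"
  proof (cases r; cases f)
    assume "r" "f"
    have "wtau n \<otimes>\<^bsub>BijGroup (WV n)\<^esub> wz n = wmap n True True (- 1)"
      unfolding wtau_eq_wmap wz_eq_wmap wmap_mult by (simp add: odd_mult_def refl_sign_def)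
    then show ?thesis using that WG_mult_closed[OF generators_in_WG(2,3)] \<open>r\<close> \<open>f\<close> by auto
  next
    assume "r" "\<not> f"
    then show ?thesis using that generators_in_WG(2) by (auto simp: wtau_eq_wmap)
  next
    assume "\<not> r" "f"
    then show ?thesis using that generators_in_WG(3) by (auto simp: wz_eq_wmap)
  next
    assume "\<not> r" "\<not> f"
    then show ?thesis using that translation_in_WG[of 0] by auto
  qed
  define k where "k = nat ((b - c) mod N)"
  have k: "int k = (b - c) mod N" unfolding k_def using mod_N_bounds by simp
  have "wmap n False False (int k) \<otimes>\<^bsub>BijGroup (WV n)\<^esub> wmap n r f c = wmap n r f (c + int k)"
    unfolding wmap_mult by (simp add: odd_mult_def refl_sign_def add.commute)
  also have "\<dots> = wmap n r f b" by (rule wmap_mod_N_cong) (simp add: k mod_simps)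
  finally show "g \<in> WG n" using WG_mult_closed[OF translation_in_WG[of k] c] g by simp
qed

lemma WG_eq_wmaps: "WG n = wmaps n"
  using WG_subset_wmaps wmaps_subset_WG by blast

lemma card_wmaps: "card (wmaps n) = 2 ^ (n + 2)"
proof -
  let ?f = "\<lambda>(r, f, b). wmap n r f b"
  have "wmaps n = ?f ` (UNIV \<times> UNIV \<times> {0..<N})"
  proof (intro equalityI subsetI)
    fix g assume "g \<in> wmaps n"
    then obtain r f b where "g = wmap n r f b" unfolding wmaps_def by blast
    moreover have "wmap n r f b = wmap n r f (b mod N)" by (rule wmap_mod_N_cong) simp
    ultimately show "g \<in> ?f ` (UNIV \<times> UNIV \<times> {0..<N})"
      using mod_N_bounds by (auto intro!: image_eqI[of _ _ "(r, f, b mod N)"])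
  qed (auto simp: wmaps_def)
  moreover have "inj_on ?f (UNIV \<times> UNIV \<times> {0..<N})"
    by (rule inj_onI) (auto dest!: wmap_eq_wmapD)
  ultimately have "card (wmaps n) = card (UNIV \<times> UNIV \<times> {0..<N} :: (bool \<times> bool \<times> int) set)"
    by (simp add: card_image)
  also have "\<dots> = 2 * 2 * 2 ^ n" by (simp add: card_cartesian_product wN_def nat_power_eq)
  finally show ?thesis by (simp add: power_add)
qed

section \<open>Action on the graph\<close>

lemma succ_mod_iff_dvd:
  assumes "a \<in> WV n" "b \<in> WV n"
  shows "(fst a + 1) mod 2 ^ n = fst b \<longleftrightarrow> N dvd int (fst a) + 1 - int (fst b)"
proof -
  have "int (fst b) mod N = int (fst b)" using assms(2) WV_int_iff by auto
  then have "(fst a + 1) mod 2 ^ n = fst b \<longleftrightarrow> (int (fst a) + 1) mod N = int (fst b) mod N"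
    by (metis mod_two_pow_int of_nat_Suc of_nat_eq_iff add.commute Suc_eq_plus1)
  also have "\<dots> \<longleftrightarrow> N dvd int (fst a) + 1 - int (fst b)" by (rule mod_eq_dvd_iff)
  finally show ?thesis .
qed

lemma Wadj_iff_dvd: "Wadj n a b \<longleftrightarrow> a \<in> WV n \<and> b \<in> WV n \<and>
    (N dvd int (fst a) + 1 - int (fst b) \<or> N dvd int (fst b) + 1 - int (fst a))"
  unfolding Wadj_def using succ_mod_iff_dvd by blast

lemma dvd_succ_diff_mod_iff: "N dvd x mod N + 1 - y mod N \<longleftrightarrow> N dvd x + 1 - y"
proof -
  have "x mod N + 1 - y mod N = (x + 1 - y) + N * (y div N - x div N)"
    by (simp add: minus_div_mult_eq_mod[symmetric] algebra_simps)
  then show ?thesis by (metis dvd_add_left_iff dvd_triv_left)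
qed

lemma wmap_Wadj_iff:
  assumes "a \<in> WV n" "b \<in> WV n"
  shows "Wadj n (wmap n r f c a) (wmap n r f c b) \<longleftrightarrow> Wadj n a b"
proof -
  have dvd: "N dvd int (fst (wmap n r f c x)) + 1 - int (fst (wmap n r f c y)) \<longleftrightarrow>
      (if r then N dvd int (fst y) + 1 - int (fst x) else N dvd int (fst x) + 1 - int (fst y))"
    if "x \<in> WV n" "y \<in> WV n" for x y
  proof -
    have "N dvd int (fst (wmap n r f c x)) + 1 - int (fst (wmap n r f c y)) \<longleftrightarrow>
        N dvd even_col r c (int (fst x)) + 1 - even_col r c (int (fst y))"
      unfolding fst_wmap[OF that(1)] fst_wmap[OF that(2)] by (rule dvd_succ_diff_mod_iff)
    then show ?thesis unfolding even_col_def by (cases r) (simp_all add: algebra_simps)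
  qed
  show ?thesis
    unfolding Wadj_iff_dvd using dvd[OF assms] dvd[OF assms(2,1)] wmap_WV assms by (cases r) auto
qed

lemma wmaps_subset_WAut: "wmaps n \<subseteq> WAut n"
  unfolding wmaps_def WAut_def using wmap_Bij wmap_Wadj_iff by auto

lemma WE_odd_even:
  assumes "e \<in> WE n"
  obtains p q where "e = {p, q}" "p \<in> WV n" "q \<in> WV n" "odd (fst p)" "even (fst q)"
    "N dvd int (fst p) + 1 - int (fst q) \<or> N dvd int (fst q) + 1 - int (fst p)"
proof -
  obtain a b where e: "e = {a, b}" and ab: "Wadj n a b" using assms unfolding WE_def by blast
  have w: "a \<in> WV n" "b \<in> WV n"
    and d: "N dvd int (fst a) + 1 - int (fst b) \<or> N dvd int (fst b) + 1 - int (fst a)"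
    using ab Wadj_iff_dvd by auto
  have "even (int (fst a) + 1 - int (fst b)) \<or> even (int (fst b) + 1 - int (fst a))"
    using d even_N dvd_trans by blast
  then have "odd (fst a) \<longleftrightarrow> even (fst b)" by auto
  then show ?thesis
    using that[of a b] that[of b a] e w d by (cases "odd (fst a)") (auto simp: insert_commute)
qed

lemma base_edge_WV: "(0, 0) \<in> WV n" "(1, 0) \<in> WV n"
  using M_ge_4 N_eq_2M by (auto simp: WV_int_iff)

lemma edge_eq_image_base_edge:
  assumes "e \<in> WE n"
  shows "\<exists>r f b. wmap n r f b ` {(0, 0), (1, 0)} = e"
proof -
  obtain p q where e: "e = {p, q}" and pq: "p \<in> WV n" "q \<in> WV n" "odd (fst p)" "even (fst q)"
    and d: "N dvd int (fst p) + 1 - int (fst q) \<or> N dvd int (fst q) + 1 - int (fst p)"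
    using WE_odd_even[OF assms] by blast
  define r where "r = (N dvd int (fst p) + 1 - int (fst q))"
  define f where "f = (snd q = 1)"
  define b where "b = odd_pos n p - odd_mult n r f * (M - 1)"
  have "wmap n r f b (1, 0) = odd_vert n (odd_pos n p)"
    using base_edge_WV odd_pos_first[of 0] by (simp add: wmap_odd b_def)
  then have p: "wmap n r f b (1, 0) = p" using odd_vert_odd_pos pq by simp
  obtain c1 where c1: "2 * odd_mult n r f = 2 * refl_sign r + N * c1" using double_odd_mult by blast
  obtain c2 where c2: "2 * odd_pos n p = int (fst p) - 3 + N * c2"
    using double_odd_pos[OF pq(1,3)] by (rule mod_N_eqE)
  have "2 * b = (int (fst p) - 3 + N * c2) - (2 * refl_sign r + N * c1) * (M - 1)"
    unfolding b_def c1[symmetric] c2[symmetric] by (simp add: algebra_simps)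
  then have "even_col r b 0 = (if r then int (fst p) + 1 else int (fst p) - 1) + N * (c2 - c1 * (M - 1) - refl_sign r)"
    unfolding even_col_def using N_eq_2M by (cases r) (simp_all add: refl_sign_def algebra_simps)
  then have "even_col r b 0 mod N = (if r then int (fst p) + 1 else int (fst p) - 1) mod N"
    by (rule mod_N_eqI)
  also have "\<dots> = int (fst q) mod N"
  proof -
    have "N dvd int (fst p) - 1 - int (fst q)" if "N dvd int (fst q) + 1 - int (fst p)"
      using that dvd_minus_iff[of N "int (fst q) + 1 - int (fst p)"] by (simp add: algebra_simps)
    then show ?thesis using d unfolding r_def by (auto simp: mod_eq_dvd_iff)
  qed
  also have "\<dots> = int (fst q)" using pq WV_int_iff by auto
  finally have "wmap n r f b (0, 0) = q"
    using base_edge_WV pq(2) unfolding f_def by (cases q) (auto simp: wmap_even WV_int_iff)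
  then show ?thesis using p e by blast
qed

lemma wmaps_edge_transitive:
  assumes "e \<in> WE n" "e' \<in> WE n"
  shows "\<exists>g\<in>wmaps n. g ` e = e'"
proof -
  obtain r f b where e: "wmap n r f b ` {(0, 0), (1, 0)} = e"
    using edge_eq_image_base_edge[OF assms(1)] by blast
  obtain r' f' b' where e': "wmap n r' f' b' ` {(0, 0), (1, 0)} = e'"
    using edge_eq_image_base_edge[OF assms(2)] by blast
  define h where "h = wmap n r f (- (odd_mult n r f * b))"
  have "h ` e = {(0, 0), (1, 0)}" unfolding e[symmetric] h_def image_image
    using wmap_inverse(1) base_edge_WV by simp
  moreover have "e \<subseteq> WV n" using e base_edge_WV wmap_WV by auto
  ultimately have "wmap n r' f' b' ` (h ` e) = e'" using e' by simp
  moreover have "wmap n r' f' b' ` (h ` e) = (wmap n r' f' b' \<otimes>\<^bsub>BijGroup (WV n)\<^esub> h) ` e"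
    using \<open>e \<subseteq> WV n\<close> unfolding h_def wmap_mult image_image
    by (intro image_cong) (auto simp: wmap_wmap)
  ultimately show ?thesis unfolding h_def wmap_mult wmaps_def by blast
qed
lemma reflection_fixes_no_adjacent_columns:
  assumes "even_col True b x mod N = x mod N" "even_col True b y mod N = y mod N"
    and "N dvd x + 1 - y \<or> N dvd y + 1 - x"
  shows False
proof -
  have "N dvd 2 * b + 6 - 2 * x" "N dvd 2 * b + 6 - 2 * y"
    using assms(1,2) by (simp_all add: mod_eq_dvd_iff even_col_def algebra_simps)
  then have "N dvd (2 * b + 6 - 2 * x) - (2 * b + 6 - 2 * y)" by (rule dvd_diff)
  then have diff: "N dvd 2 * (y - x)" by (simp add: algebra_simps)
  have "N dvd 2"
    using assms(3)
  proof
    assume "N dvd x + 1 - y"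
    then have "N dvd 2 * (x + 1 - y)" by (rule dvd_mult)
    then have "N dvd 2 * (x + 1 - y) + 2 * (y - x)" using diff by (rule dvd_add)
    then show ?thesis by (simp add: algebra_simps)
  next
    assume "N dvd y + 1 - x"
    then have "N dvd 2 * (y + 1 - x)" by (rule dvd_mult)
    then have "N dvd 2 * (y + 1 - x) - 2 * (y - x)" using diff by (rule dvd_diff)
    then show ?thesis by (simp add: algebra_simps)
  qed
  then show False using M_ge_4 N_eq_2M zdvd_imp_le[of N 2] by simp
qed

lemma wmaps_edge_stabiliser_trivial:
  assumes "e \<in> WE n" "g \<in> wmaps n" "g ` e = e"
  shows "g = \<one>\<^bsub>BijGroup (WV n)\<^esub>"
proof -
  obtain p q where e: "e = {p, q}" and pq: "p \<in> WV n" "q \<in> WV n" "odd (fst p)" "even (fst q)"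
    and adj: "N dvd int (fst p) + 1 - int (fst q) \<or> N dvd int (fst q) + 1 - int (fst p)"
    using WE_odd_even[OF assms(1)] by blast
  obtain r f b where g: "g = wmap n r f b" using assms(2) unfolding wmaps_def by blast
  have "g p \<in> {p, q}" "g q \<in> {p, q}" using assms(3) e by auto
  moreover have "odd (fst (g p))" "even (fst (g q))" using wmap_WV even_fst_wmap pq g by auto
  ultimately have gp: "g p = p" and gq: "g q = q" using pq by auto
  have "snd q < 2" using pq WV_int_iff by auto
  then have "1 - snd q \<noteq> snd q" by arith
  then have not_f: "\<not> f" using gq pq(2,4) unfolding g by (auto simp: wmap_even prod_eq_iff)
  have "int (fst p) mod N = int (fst p)" "int (fst q) mod N = int (fst q)" using pq WV_int_iff by auto
  then have "even_col r b (int (fst p)) mod N = int (fst p) mod N"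
    "even_col r b (int (fst q)) mod N = int (fst q) mod N"
    using fst_wmap[OF pq(1), of r f b] fst_wmap[OF pq(2), of r f b] gp gq unfolding g by auto
  then have not_r: "\<not> r" using reflection_fixes_no_adjacent_columns[OF _ _ adj] by auto
  have "odd_pos n p = (odd_pos n p + b) mod N"
    using odd_pos_wmap[OF pq(1,3), of r f b] gp not_r not_f unfolding g by (simp add: odd_mult_def refl_sign_def)
  moreover have "odd_pos n p mod N = odd_pos n p" using odd_pos_bounds[OF pq(1,3)] by simp
  ultimately have "(odd_pos n p + b) mod N = (odd_pos n p + 0) mod N" by simp
  then have "b mod N = 0 mod N" by (simp add: mod_eq_dvd_iff)
  then have "wmap n False False b = wmap n False False 0" by (rule wmap_mod_N_cong)
  then show ?thesis using g not_r not_f wmap_id by simp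
qed

section \<open>Fixed points of involutions\<close>

lemma wmap_fixes_odd_vertex:
  assumes "odd_mult n r f * t + b = t + N * c"
  shows "\<exists>v\<in>WV n. wmap n r f b v = v"
proof
  have "(odd_mult n r f * (t mod N) + b) mod N = (odd_mult n r f * t + b) mod N"
    by (metis mod_add_left_eq mod_mult_right_eq)
  also have "\<dots> = t mod N" using assms by (rule mod_N_eqI)
  finally have "odd_vert n (odd_mult n r f * (t mod N) + b) = odd_vert n t" by (rule odd_vert_cong)
  then show "wmap n r f b (odd_vert n t) = odd_vert n t"
    using odd_vert_WV odd_fst_odd_vert by (simp add: wmap_odd odd_pos_odd_vert)
  show "odd_vert n t \<in> WV n" by (rule odd_vert_WV)
qed

lemma wmap_fixes_even_vertex:
  assumes "even i" "0 \<le> i" "i < N" "even_col r b i mod N = i"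
  shows "\<exists>v\<in>WV n. wmap n r False b v = v"
proof
  show "(nat i, 0) \<in> WV n" using assms by (simp add: WV_int_iff)
  then show "wmap n r False b (nat i, 0) = (nat i, 0)" using assms by (simp add: wmap_even even_nat_iff)
qed

lemma layer_swap_involution_fixes_vertex:
  assumes "N dvd (odd_mult n r True + 1) * b"
  shows "\<exists>v\<in>WV n. wmap n r True b v = v"
proof -
  obtain c where "(odd_mult n r True + 1) * b = N * c" using assms by (elim dvdE)
  then have c: "odd_mult n r True * b + b = N * c" by (simp add: algebra_simps)
  show ?thesis
  proof (cases r)
    case False
    then have "(2 + 4 * K) * b = 8 * K * c" using c M_eq_4K N_eq_8K
      by (simp add: odd_mult_def refl_sign_def algebra_simps)
    then have bc: "(1 + 2 * K) * b = 4 * K * c" by (simp add: algebra_simps)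
    define t where "t = c * (1 - 2 * K) + K * b"
    \<comment> \<open>\<open>(1 - 2K)(1 + 2K) = 1 - 4K\<^sup>2\<close> turns \<open>bc\<close> into \<open>b = M t\<close>\<close>
    have "4 * K * t = (1 - 2 * K) * (4 * K * c) + 4 * K * K * b" unfolding t_def by (simp add: algebra_simps)
    also have "\<dots> = (1 - 2 * K) * ((1 + 2 * K) * b) + 4 * K * K * b" by (simp only: bc)
    also have "\<dots> = b" by (simp add: algebra_simps)
    finally have "odd_mult n r True * t + b = t + N * t" using False M_eq_4K N_eq_8K
      by (simp add: odd_mult_def refl_sign_def algebra_simps)
    then show ?thesis by (rule wmap_fixes_odd_vertex)
  next
    case True
    then have "M * (- b) = M * (2 * c)" using c N_eq_2M
      by (simp add: odd_mult_def refl_sign_def algebra_simps)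
    moreover have "M \<noteq> 0" using M_ge_4 by simp
    ultimately have "- b = 2 * c" by (simp only: mult_cancel_left simp_thms)
    then have b: "b = - 2 * c" by simp
    \<comment> \<open>\<open>(2 + M) t \<equiv> b\<close> modulo \<open>N\<close>, as \<open>b = -2c\<close> and \<open>(1 + 2K)\<^sup>2 \<equiv> 1\<close> modulo \<open>M = 4K\<close>\<close>
    define t where "t = (1 + 2 * K) * (- c)"
    have "odd_mult n r True * t + b = t + N * ((1 + K) * c)" unfolding b t_def using True M_eq_4K N_eq_8K
      by (simp add: odd_mult_def refl_sign_def algebra_simps)
    then show ?thesis by (rule wmap_fixes_odd_vertex)
  qed
qed

lemma wmap_involution_fixes_vertex:
  assumes "N dvd (odd_mult n r f + 1) * b"
  shows "\<exists>v\<in>WV n. wmap n r f b v = v"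
proof (cases f)
  case True
  then show ?thesis using assms layer_swap_involution_fixes_vertex by simp
next
  case False
  obtain c where "(odd_mult n r f + 1) * b = N * c" using assms by (elim dvdE)
  then have c: "odd_mult n r False * b + b = N * c" using False by (simp add: algebra_simps)
  show ?thesis
  proof (cases r)
    case False
    then have "2 * b = N * c" using c by (simp add: odd_mult_def refl_sign_def)
    then have "even_col False b 0 mod N = 0" unfolding even_col_def by simp
    then show ?thesis using False \<open>\<not> f\<close> wmap_fixes_even_vertex[of 0] N_eq_2M M_ge_4 by simp
  next
    case True
    show ?thesis
    proof (cases "even b")
      case True
      then obtain t where "b = 2 * t" by (auto elim: evenE)
      then have "odd_mult n r f * t + b = t + N * 0" using \<open>r\<close> \<open>\<not> f\<close> by (simp add: odd_mult_def refl_sign_def)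
      then show ?thesis by (rule wmap_fixes_odd_vertex)
    next
      case False
      define i where "i = (b + 3) mod N"
      have "even (b + 3)" using False by simp
      then have "even i" unfolding i_def using even_N by (simp add: dvd_mod)
      have "i = b + 3 - N * ((b + 3) div N)"
        unfolding i_def by (simp add: minus_div_mult_eq_mod[symmetric] mult.commute)
      then have "even_col True b i = i + N * (2 * ((b + 3) div N))"
        unfolding even_col_def by (simp add: algebra_simps)
      then have "even_col True b i mod N = i" using mod_N_bounds[of "b + 3"] unfolding i_def by simp
      then have "\<exists>v\<in>WV n. wmap n True False b v = v"
        using \<open>even i\<close> mod_N_bounds[of "b + 3"] unfolding i_def by (intro wmap_fixes_even_vertex)
      then show ?thesis using \<open>r\<close> \<open>\<not> f\<close> by simp
    qed
  qed
qed

lemma wmaps_square_one_fixes_vertex: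
  assumes "g \<in> wmaps n" "g \<otimes>\<^bsub>BijGroup (WV n)\<^esub> g = \<one>\<^bsub>BijGroup (WV n)\<^esub>"
  shows "\<exists>v\<in>WV n. g v = v"
proof -
  obtain r f b where g: "g = wmap n r f b" using assms(1) unfolding wmaps_def by blast
  have "wmap n False False (odd_mult n r f * b + b) = wmap n False False 0"
    using assms(2) unfolding g wmap_mult by (simp add: wmap_id)
  then have "(odd_mult n r f * b + b) mod N = 0 mod N" by (blast dest: wmap_eq_wmapD)
  then have "N dvd (odd_mult n r f + 1) * b" by (simp add: mod_eq_0_iff_dvd distrib_right)
  then show ?thesis unfolding g by (rule wmap_involution_fixes_vertex)
qed

end

theorem lemma4p1:
  fixes n :: nat
  assumes "n \<ge> 3"
  shows "WG n \<subseteq> WAut n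
    \<and> card (WG n) = 2 ^ (n + 2)
    \<and> (\<forall>e\<in>WE n. \<forall>e'\<in>WE n. \<exists>g\<in>WG n. g ` e = e')
    \<and> (\<forall>e\<in>WE n. \<forall>g\<in>WG n. g ` e = e \<longrightarrow> g = \<one>\<^bsub>BijGroup (WV n)\<^esub>)
    \<and> (\<forall>g\<in>WG n. g \<noteq> \<one>\<^bsub>BijGroup (WV n)\<^esub> \<and> g \<otimes>\<^bsub>BijGroup (WV n)\<^esub> g = \<one>\<^bsub>BijGroup (WV n)\<^esub>
         \<longrightarrow> (\<exists>v\<in>WV n. g v = v))"
  unfolding WG_eq_wmaps[OF assms]
  using wmaps_subset_WAut[OF assms] card_wmaps[OF assms] wmaps_edge_transitive[OF assms]
    wmaps_edge_stabiliser_trivial[OF assms] wmaps_square_one_fixes_vertex[OF assms]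
  by simp

end
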